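(* Let $P_n$ be the path with vertices $x_1,\dots,x_n$ and edges $\{x_i,x_{i+1}\}$ ($1\le i\le n-1$). Then no stable set corresponding to $v(P_n)$ contains both endpoints $x_1$ and $x_n$.
   Context: Let $K$ be a field and $S=K[x_1,\dots,x_n]$ standard graded. For a proper graded ideal $I$, the $v$-number is $v(I)=\min\{k\ge 0 : \exists f\in S_k,\ \mathcal P\in\operatorname{Ass}(S/I) \text{ with } (I:f)=\mathcal P\}$. For a graph $G$, $I(G)$ is its edge ideal (generated by $x_ix_j$ over edges $\{x_i,x_j\}$) and $v(G):=v(I(G))$. A set $A$ of vertices is stable if it contains no edge. For a stable set $A$, its neighbour set is $N_G(A)=\{x\in V(G) : \{x\}\cup A \text{ contains an edge of } G\}$. A vertex cover is a set of vertices meeting every edge; it is minimal if minimal under inclusion. Let $\mathcal A_G$ be the collection of stable sets $A$ of $G$ such that $N_G(A)$ is a minimal vertex cover of $G$; it is known that $v(G)=\min\{|A| : A\in\mathcal A_G\}$. A stable set corresponding to $v(G)$ is an $A\in\mathcal A_G$ with $|A|=v(G)$. *)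

theory Defs
  imports Main
begin

text \<open>A simple graph is given by a vertex set V and a set E of edges, each edge
a two-element subset of V.\<close>

definition stable_set :: "'a set \<Rightarrow> 'a set set \<Rightarrow> 'a set \<Rightarrow> bool" where
  "stable_set V E A \<longleftrightarrow> A \<subseteq> V \<and> (\<forall>e\<in>E. \<not> e \<subseteq> A)"

definition nbr_set :: "'a set \<Rightarrow> 'a set set \<Rightarrow> 'a set \<Rightarrow> 'a set" where
  "nbr_set V E A = {x \<in> V. \<exists>e\<in>E. e \<subseteq> insert x A}"

definition vertex_cover :: "'a set \<Rightarrow> 'a set set \<Rightarrow> 'a set \<Rightarrow> bool" where
  "vertex_cover V E C \<longleftrightarrow> C \<subseteq> V \<and> (\<forall>e\<in>E. e \<inter> C \<noteq> {})"

definition min_vertex_cover :: "'a set \<Rightarrow> 'a set set \<Rightarrow> 'a set \<Rightarrow> bool" where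
  "min_vertex_cover V E C \<longleftrightarrow> vertex_cover V E C \<and> (\<forall>D. D \<subset> C \<longrightarrow> \<not> vertex_cover V E D)"

definition calA :: "'a set \<Rightarrow> 'a set set \<Rightarrow> 'a set set" where
  "calA V E = {A. stable_set V E A \<and> min_vertex_cover V E (nbr_set V E A)}"

text \<open>v(G) = min{|A| : A \<in> \<A>_G} (the known combinatorial characterisation).\<close>
definition v_number :: "'a set \<Rightarrow> 'a set set \<Rightarrow> nat" where
  "v_number V E = Min (card ` calA V E)"

definition path_vertices :: "nat \<Rightarrow> nat set" where
  "path_vertices n = {1..n}"

definition path_edges :: "nat \<Rightarrow> nat set set" where
  "path_edges n = {{i, Suc i} | i. 1 \<le> i \<and> i < n}"

end

theory Submission
  imports Defs
begin

text \<open>Let A \<in> \<A>(P_n) contain both endpoints. Since N(A) covers every edge, each vertex of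
  P_n lies in A, next to A, or two steps to the right of A; as 1 and n are in A, this gives
  n \<le> |A| + 3(|A| - 1). On the other hand, the vertices 3, 7, 11, \<dots> (together with n when
  n \<equiv> 2 mod 4) form a member of \<A>(P_n) with at most (n + 2)/4 elements, so |A| > v(P_n).\<close>

lemma nbr_set_subset: "nbr_set V E A \<subseteq> V"
  unfolding nbr_set_def by blast

lemma stable_set_disjoint_nbr_set:
  assumes "stable_set V E A"
  shows "A \<inter> nbr_set V E A = {}"
  using assms by (auto simp: stable_set_def nbr_set_def insert_absorb)

text \<open>Every x \<in> N(A) lies on an edge whose other end is in A, hence outside N(A);
  removing x from N(A) uncovers that edge.\<close>
lemma min_vertex_cover_nbr_set_iff:
  assumes stable: "stable_set V E A"
  shows "min_vertex_cover V E (nbr_set V E A) \<longleftrightarrow> vertex_cover V E (nbr_set V E A)"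
proof
  assume cover: "vertex_cover V E (nbr_set V E A)"
  have "\<not> vertex_cover V E D" if D: "D \<subset> nbr_set V E A" for D
  proof
    assume "vertex_cover V E D"
    obtain x where x: "x \<in> nbr_set V E A" "x \<notin> D" using D by blast
    then obtain e where e: "e \<in> E" "e \<subseteq> insert x A" unfolding nbr_set_def by blast
    with \<open>vertex_cover V E D\<close> obtain y where "y \<in> e" "y \<in> D"
      unfolding vertex_cover_def by blast
    with e x D stable_set_disjoint_nbr_set[OF stable] show False by blast
  qed
  with cover show "min_vertex_cover V E (nbr_set V E A)"
    unfolding min_vertex_cover_def by blast
qed (simp add: min_vertex_cover_def)

lemma calA_iff:
  "A \<in> calA V E \<longleftrightarrow> stable_set V E A \<and> vertex_cover V E (nbr_set V E A)"
  unfolding calA_def using min_vertex_cover_nbr_set_iff by blast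

lemma v_number_le_card:
  assumes "finite V" and "B \<in> calA V E"
  shows "v_number V E \<le> card B"
proof -
  have "calA V E \<subseteq> Pow V" unfolding calA_def stable_set_def by blast
  with assms show ?thesis
    unfolding v_number_def by (meson Min_le finite_Pow_iff finite_imageI finite_subset imageI)
qed

lemma finite_path_vertices: "finite (path_vertices n)"
  by (simp add: path_vertices_def)

lemma path_edgeI: "1 \<le> i \<Longrightarrow> i < n \<Longrightarrow> {i, Suc i} \<in> path_edges n"
  unfolding path_edges_def by blast

lemma path_edgesE:
  assumes "e \<in> path_edges n"
  obtains i where "e = {i, Suc i}" and "1 \<le> i" and "i < n"
  using assms unfolding path_edges_def by blast

lemma stable_set_path_iff:
  "stable_set (path_vertices n) (path_edges n) A \<longleftrightarrow> A \<subseteq> {1..n} \<and> (\<forall>x\<in>A. Suc x \<notin> A)"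
proof -
  have "(\<forall>e\<in>path_edges n. \<not> e \<subseteq> A) \<longleftrightarrow> (\<forall>x\<in>A. Suc x \<notin> A)" if "A \<subseteq> {1..n}"
  proof
    assume no_edge: "\<forall>e\<in>path_edges n. \<not> e \<subseteq> A"
    show "\<forall>x\<in>A. Suc x \<notin> A"
    proof (intro ballI notI)
      fix x assume "x \<in> A" "Suc x \<in> A"
      with \<open>A \<subseteq> {1..n}\<close> have "{x, Suc x} \<in> path_edges n" by (intro path_edgeI) auto
      with no_edge have "\<not> {x, Suc x} \<subseteq> A" by (rule bspec)
      with \<open>x \<in> A\<close> \<open>Suc x \<in> A\<close> show False by simp
    qed
  next
    assume "\<forall>x\<in>A. Suc x \<notin> A"
    then show "\<forall>e\<in>path_edges n. \<not> e \<subseteq> A" by (blast elim!: path_edgesE)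
  qed
  then show ?thesis unfolding stable_set_def path_vertices_def by blast
qed

lemma vertex_cover_path_iff:
  "vertex_cover (path_vertices n) (path_edges n) C \<longleftrightarrow>
     C \<subseteq> {1..n} \<and> (\<forall>i. 1 \<le> i \<longrightarrow> i < n \<longrightarrow> i \<in> C \<or> Suc i \<in> C)"
proof -
  have "(\<forall>e\<in>path_edges n. e \<inter> C \<noteq> {}) \<longleftrightarrow> (\<forall>i. 1 \<le> i \<longrightarrow> i < n \<longrightarrow> i \<in> C \<or> Suc i \<in> C)"
  proof (intro iffI allI impI ballI)
    fix i assume cover: "\<forall>e\<in>path_edges n. e \<inter> C \<noteq> {}" and "1 \<le> i" "i < n"
    have "{i, Suc i} \<inter> C \<noteq> {}" using cover path_edgeI[OF \<open>1 \<le> i\<close> \<open>i < n\<close>] by (rule bspec)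
    then show "i \<in> C \<or> Suc i \<in> C" by blast
  next
    fix e assume "\<forall>i. 1 \<le> i \<longrightarrow> i < n \<longrightarrow> i \<in> C \<or> Suc i \<in> C" "e \<in> path_edges n"
    then show "e \<inter> C \<noteq> {}" by (blast elim!: path_edgesE)
  qed
  then show ?thesis unfolding vertex_cover_def path_vertices_def by blast
qed

lemma nbr_set_path:
  assumes "stable_set (path_vertices n) (path_edges n) A"
  shows "x \<in> nbr_set (path_vertices n) (path_edges n) A \<longleftrightarrow>
           x \<in> {1..n} \<and> (Suc x \<in> A \<or> (\<exists>y\<in>A. x = Suc y))"
proof -
  have A: "A \<subseteq> {1..n}" "\<forall>x\<in>A. Suc x \<notin> A"
    using assms unfolding stable_set_path_iff by auto
  have "(\<exists>e\<in>path_edges n. e \<subseteq> insert x A) \<longleftrightarrow> Suc x \<in> A \<or> (\<exists>y\<in>A. x = Suc y)"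
    if "x \<in> {1..n}"
  proof
    assume "\<exists>e\<in>path_edges n. e \<subseteq> insert x A"
    then obtain i where "i \<in> insert x A" "Suc i \<in> insert x A"
      by (auto elim!: path_edgesE)
    with A(2) show "Suc x \<in> A \<or> (\<exists>y\<in>A. x = Suc y)" by auto
  next
    assume "Suc x \<in> A \<or> (\<exists>y\<in>A. x = Suc y)"
    then obtain i where i: "1 \<le> i" "i < n" "{i, Suc i} \<subseteq> insert x A"
    proof
      assume "Suc x \<in> A"
      with that \<open>x \<in> {1..n}\<close> A(1) show thesis by (intro that[of x]) auto
    next
      assume "\<exists>y\<in>A. x = Suc y"
      with that \<open>x \<in> {1..n}\<close> A(1) show thesis by (auto intro: that)
    qed
    with path_edgeI[OF i(1,2)] show "\<exists>e\<in>path_edges n. e \<subseteq> insert x A" by blast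
  qed
  then show ?thesis unfolding nbr_set_def path_vertices_def by blast
qed

lemma card_lower_bound_path_endpoints:
  assumes stable: "stable_set (path_vertices n) (path_edges n) A"
    and cover: "vertex_cover (path_vertices n) (path_edges n) (nbr_set (path_vertices n) (path_edges n) A)"
    and "1 \<in> A" and "n \<in> A"
  shows "n + 3 \<le> 4 * card A"
proof -
  let ?N = "nbr_set (path_vertices n) (path_edges n) A"
  let ?S = "A \<union> Suc ` (A - {n}) \<union> (\<lambda>y. y - 1) ` (A - {1}) \<union> (\<lambda>y. y + 2) ` (A - {n})"
  have "A \<subseteq> {1..n}" using stable unfolding stable_set_path_iff by blast
  then have "finite A" using finite_subset by blast
  have "x \<in> ?S" if x: "x \<in> {1..n}" for x
  proof -
    consider "x \<in> A" | y where "y \<in> A" "x = Suc y" | "Suc x \<in> A" | "x \<notin> ?N" "x \<notin> A"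
      using nbr_set_path[OF stable] x by blast
    then show ?thesis
    proof cases
      case (2 y)
      with x have "y \<in> A - {n}" by auto
      with \<open>x = Suc y\<close> show ?thesis by blast
    next
      case 3
      with x have "Suc x \<in> A - {1}" by simp
      then show ?thesis by (intro UnI1 UnI2 rev_image_eqI[of "Suc x"]) simp_all
    next
      case 4
      with \<open>1 \<in> A\<close> have "x \<noteq> 1" by auto
      with x have "1 \<le> x - 1" "x - 1 < n" "Suc (x - 1) = x" by auto
      with 4 cover have "x - 1 \<in> ?N" unfolding vertex_cover_path_iff by metis
      with 4 \<open>Suc (x - 1) = x\<close> obtain y where "y \<in> A" "x - 1 = Suc y"
        using nbr_set_path[OF stable] by metis
      with x have "y \<in> A - {n}" "x = y + 2" by auto
      then show ?thesis by blast
    qed simp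
  qed
  then have "card {1..n} \<le> card ?S"
    by (intro card_mono) (simp_all add: \<open>finite A\<close> subset_iff)
  also have "\<dots> \<le> card A + card (Suc ` (A - {n})) + card ((\<lambda>y. y - 1) ` (A - {1}))
      + card ((\<lambda>y. y + 2) ` (A - {n}))"
    by (meson add_le_mono card_Un_le le_refl order_trans)
  also have "\<dots> \<le> card A + card (A - {n}) + card (A - {1}) + card (A - {n})"
    by (intro add_le_mono card_image_le le_refl finite_Diff \<open>finite A\<close>)
  also have "\<dots> = card A + 3 * (card A - 1)"
    using \<open>finite A\<close> \<open>1 \<in> A\<close> \<open>n \<in> A\<close> by simp
  finally show ?thesis using \<open>finite A\<close> \<open>1 \<in> A\<close> card_0_eq by fastforce
qed

text \<open>The neighbours 2, 4, 6, \<dots> of 3, 7, 11, \<dots> cover all edges of P_n except the last one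
  when n \<equiv> 2 mod 4, which is covered by n - 1 once n is added.\<close>
definition path_v_witness :: "nat \<Rightarrow> nat set" where
  "path_v_witness n = {x \<in> {1..n}. x mod 4 = 3 \<or> (x = n \<and> n mod 4 = 2)}"

lemma path_v_witness_meets_window:
  assumes "1 \<le> i" and "i < n"
  obtains y where "y \<in> path_v_witness n" and "i \<le> Suc y" and "y \<le> i + 2"
proof -
  define q where "q = i div 4"
  have i: "i = 4 * q + i mod 4" unfolding q_def by simp
  consider "i mod 4 = 0" | "i mod 4 \<noteq> 0" "4 * q + 3 \<le> n" | "i mod 4 \<noteq> 0" "n < 4 * q + 3"
    by linarith
  then show ?thesis
  proof cases
    case 1
    with i assms have "q \<ge> 1" by linarith
    then have "(4 * (q - 1) + 3) mod 4 = 3" by simp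
    with \<open>q \<ge> 1\<close> i 1 assms show ?thesis by (intro that[of "4 * (q - 1) + 3"]) (auto simp: path_v_witness_def)
  next
    case 2
    moreover have "(4 * q + 3) mod 4 = 3" by simp
    ultimately show ?thesis using i assms mod_less_divisor[of 4 i]
      by (intro that[of "4 * q + 3"]) (auto simp: path_v_witness_def)
  next
    case 3
    with i assms mod_less_divisor[of 4 i] have "n = 4 * q + 2" "i = 4 * q + 1" by linarith+
    moreover have "(4 * q + 2) mod 4 = 2" by presburger
    ultimately show ?thesis by (intro that[of n]) (auto simp: path_v_witness_def)
  qed
qed

lemma path_v_witness_in_calA:
  "path_v_witness n \<in> calA (path_vertices n) (path_edges n)"
proof -
  let ?B = "path_v_witness n"
  let ?N = "nbr_set (path_vertices n) (path_edges n) ?B"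
  have "Suc x \<notin> ?B" if "x \<in> ?B" for x
  proof
    assume "Suc x \<in> ?B"
    with that have "x mod 4 = 3" unfolding path_v_witness_def by auto
    then have "Suc x mod 4 = 0" by (simp add: mod_Suc)
    with \<open>Suc x \<in> ?B\<close> show False unfolding path_v_witness_def by auto
  qed
  then have stable: "stable_set (path_vertices n) (path_edges n) ?B"
    unfolding stable_set_path_iff path_v_witness_def by blast
  have "i \<in> ?N \<or> Suc i \<in> ?N" if i: "1 \<le> i" "i < n" for i
  proof -
    obtain y where y: "y \<in> ?B" "i \<le> Suc y" "y \<le> i + 2"
      using path_v_witness_meets_window i by blast
    then consider "Suc y = i \<or> y = Suc i" | "y = i \<or> y = Suc (Suc i)" by linarith
    then show ?thesis
    proof cases
      case 1
      with y(1) i have "i \<in> ?N" unfolding nbr_set_path[OF stable] by auto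
      then show ?thesis ..
    next
      case 2
      with y(1) i have "Suc i \<in> ?N" unfolding nbr_set_path[OF stable] by auto
      then show ?thesis ..
    qed
  qed
  then have "vertex_cover (path_vertices n) (path_edges n) ?N"
    unfolding vertex_cover_path_iff using nbr_set_subset[of "path_vertices n"]
    by (simp add: path_vertices_def)
  with stable show ?thesis unfolding calA_iff ..
qed

lemma card_path_v_witness: "4 * card (path_v_witness n) \<le> n + 2"
proof -
  have "x \<in> (\<lambda>k. min (4 * k + 3) n) ` {..<(n + 2) div 4}" if "x \<in> path_v_witness n" for x
  proof -
    from that have "x \<le> n" "x mod 4 = 3 \<or> (x = n \<and> x mod 4 = 2)"
      unfolding path_v_witness_def by auto
    then have x: "x = min (4 * (x div 4) + 3) n" and "4 * (x div 4) + 4 \<le> n + 2"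
      using div_mult_mod_eq[of x 4] by linarith+
    then have "x div 4 < (n + 2) div 4"
      by (simp add: Suc_le_eq[symmetric] less_eq_div_iff_mult_less_eq)
    with x show ?thesis by (intro rev_image_eqI[of "x div 4"]) simp_all
  qed
  then have "card (path_v_witness n) \<le> card ((\<lambda>k. min (4 * k + 3) n) ` {..<(n + 2) div 4})"
    by (intro card_mono) auto
  also have "\<dots> \<le> (n + 2) div 4"
    using card_image_le[of "{..<(n + 2) div 4}"] by simp
  finally show ?thesis by linarith
qed

lemma v_number_path_le: "4 * v_number (path_vertices n) (path_edges n) \<le> n + 2"
  using v_number_le_card[OF finite_path_vertices path_v_witness_in_calA] card_path_v_witness
  by (meson dual_order.trans mult_le_mono2)

theorem lemma3p3:
  fixes n :: nat and A :: "nat set"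
  assumes "A \<in> calA (path_vertices n) (path_edges n)"
    and "card A = v_number (path_vertices n) (path_edges n)"
  shows "\<not> (1 \<in> A \<and> n \<in> A)"
proof
  assume "1 \<in> A \<and> n \<in> A"
  with assms(1) have "n + 3 \<le> 4 * card A"
    unfolding calA_iff using card_lower_bound_path_endpoints by blast
  with assms(2) v_number_path_le[of n] show False by linarith
qed

end
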